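(* Let $G=(V,E)$ be a graph and consider a routing game on $G$ with players $\pi_1,\dots,\pi_N$, player $\pi_i$ having a strategy set $\mathcal{P}_i$ of paths from $u_i$ to $v_i$, and player cost $\widetilde C_i(\mathbf{p})=\sum_{e\in p_i}2^{C_e(\mathbf{p})}$. If in routing $\mathbf{p}$ a player $\pi_i$ performs a greedy move, producing routing $\mathbf{p}'$, then $\widetilde C_E(\mathbf{p})>\widetilde C_E(\mathbf{p}')$, where $\widetilde C_E(\mathbf{q})=\sum_{e\in E}2^{C_e(\mathbf{q})}$.
   Context: A routing is $\mathbf{p}=[p_1,\dots,p_N]$ with $p_i\in\mathcal{P}_i$; $C_e(\mathbf{p})$ is the number of paths of $\mathbf{p}$ that use edge $e$. A greedy move by player $\pi_i$ in $\mathbf{p}$ is a change of its path from $p_i$ to some $p_i'\in\mathcal{P}_i$ such that $\widetilde C_i(\mathbf{p})>\widetilde C_i(p_i';\mathbf{p}_{-i})$, where $(p_i';\mathbf{p}_{-i})$ denotes the routing obtained from $\mathbf{p}$ by replacing $p_i$ with $p_i'$; the resulting routing is $\mathbf{p}'=(p_i';\mathbf{p}_{-i})$. *)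

theory Defs
  imports Main
begin

definition graph :: "'v set \<Rightarrow> 'v set set \<Rightarrow> bool" where
  "graph V E \<longleftrightarrow> finite V \<and> (\<forall>e\<in>E. card e = 2 \<and> e \<subseteq> V)"

definition path_edges :: "'v list \<Rightarrow> 'v set set" where
  "path_edges xs = {{xs ! k, xs ! Suc k} | k. Suc k < length xs}"

definition is_path :: "'v set \<Rightarrow> 'v set set \<Rightarrow> 'v \<Rightarrow> 'v \<Rightarrow> 'v list \<Rightarrow> bool" where
  "is_path V E u v xs \<longleftrightarrow> xs \<noteq> [] \<and> hd xs = u \<and> last xs = v \<and> distinct xs
     \<and> set xs \<subseteq> V \<and> path_edges xs \<subseteq> E"

definition congestion :: "nat \<Rightarrow> (nat \<Rightarrow> 'v list) \<Rightarrow> 'v set \<Rightarrow> nat" where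
  "congestion N p e = card {i. i < N \<and> e \<in> path_edges (p i)}"

definition player_cost :: "nat \<Rightarrow> (nat \<Rightarrow> 'v list) \<Rightarrow> nat \<Rightarrow> nat" where
  "player_cost N p i = (\<Sum>e\<in>path_edges (p i). 2 ^ congestion N p e)"

definition total_cost :: "'v set set \<Rightarrow> nat \<Rightarrow> (nat \<Rightarrow> 'v list) \<Rightarrow> nat" where
  "total_cost E N p = (\<Sum>e\<in>E. 2 ^ congestion N p e)"

end

theory Submission
  imports Defs
begin

text \<open>The total cost is a weighted potential: edgewise, a move changes the congestion only on the
  edges the moving player leaves (down by one) or joins (up by one), and for every edge
  \<open>2 \<cdot> 2\<^bsup>C\<^sub>e(p)\<^esup> + [e \<in> p\<^sub>i'] 2\<^bsup>C\<^sub>e(p')\<^esup> = 2 \<cdot> 2\<^bsup>C\<^sub>e(p')\<^esup> + [e \<in> p\<^sub>i] 2\<^bsup>C\<^sub>e(p)\<^esup>\<close>.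
  Summing over \<open>E\<close> gives \<open>2 C\<^sub>E(p) - 2 C\<^sub>E(p') = C\<^sub>i(p) - C\<^sub>i(p')\<close>,
  so a greedy move strictly decreases \<open>C\<^sub>E\<close>.\<close>

lemma congestion_split:
  assumes "i < N"
  shows "congestion N p e =
    card {j. j < N \<and> j \<noteq> i \<and> e \<in> path_edges (p j)} + of_bool (e \<in> path_edges (p i))"
proof -
  let ?others = "{j. j < N \<and> j \<noteq> i \<and> e \<in> path_edges (p j)}"
  have "{j. j < N \<and> e \<in> path_edges (p j)} =
      (if e \<in> path_edges (p i) then insert i ?others else ?others)"
    using assms by auto
  then show ?thesis
    unfolding congestion_def by simp
qed

lemma congestion_fun_upd:
  assumes "i < N"
  shows "congestion N (p(i := q)) e + of_bool (e \<in> path_edges (p i)) =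
    congestion N p e + of_bool (e \<in> path_edges q)"
proof -
  have "{j. j < N \<and> j \<noteq> i \<and> e \<in> path_edges ((p(i := q)) j)} =
      {j. j < N \<and> j \<noteq> i \<and> e \<in> path_edges (p j)}"
    by auto
  then show ?thesis
    using congestion_split[OF assms, of p e] congestion_split[OF assms, of "p(i := q)" e]
    by simp
qed

lemma two_pow_exchange:
  fixes c c' :: nat
  assumes "c' + of_bool a = c + of_bool b"
  shows "2 * 2 ^ c + of_bool b * 2 ^ c' = 2 * 2 ^ c' + of_bool a * (2::nat) ^ c"
  using assms by (cases a; cases b) auto

lemma player_cost_as_sum:
  assumes "finite E" and "path_edges (p i) \<subseteq> E"
  shows "player_cost N p i = (\<Sum>e\<in>E. of_bool (e \<in> path_edges (p i)) * 2 ^ congestion N p e)"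
proof -
  have "player_cost N p i = (\<Sum>e\<in>E \<inter> path_edges (p i). 2 ^ congestion N p e)"
    unfolding player_cost_def using assms(2) by (simp add: Int_absorb1)
  also have "\<dots> = (\<Sum>e\<in>E. of_bool (e \<in> path_edges (p i)) * 2 ^ congestion N p e)"
    using assms(1) by (simp add: sum.inter_restrict if_distrib cong: if_cong)
  finally show ?thesis .
qed

lemma total_cost_weighted_potential:
  assumes "finite E" and "path_edges (p i) \<subseteq> E" and "path_edges q \<subseteq> E"
    and "i < N"
  shows "2 * total_cost E N p + player_cost N (p(i := q)) i =
    2 * total_cost E N (p(i := q)) + player_cost N p i"
proof -
  have q_cost: "player_cost N (p(i := q)) i =
      (\<Sum>e\<in>E. of_bool (e \<in> path_edges q) * 2 ^ congestion N (p(i := q)) e)"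
    using player_cost_as_sum[OF assms(1), of "p(i := q)" i N] assms(3) by simp
  have "\<And>e. 2 * 2 ^ congestion N p e + of_bool (e \<in> path_edges q) * 2 ^ congestion N (p(i := q)) e
      = 2 * 2 ^ congestion N (p(i := q)) e + of_bool (e \<in> path_edges (p i)) * (2::nat) ^ congestion N p e"
    by (rule two_pow_exchange[OF congestion_fun_upd[OF assms(4)]])
  then show ?thesis
    unfolding total_cost_def q_cost player_cost_as_sum[OF assms(1), of p i, OF assms(2)]
    by (simp add: sum_distrib_left flip: sum.distrib)
qed

theorem lemma1:
  fixes V :: "'v set" and E :: "'v set set" and N :: nat
    and u w :: "nat \<Rightarrow> 'v" and P :: "nat \<Rightarrow> 'v list set"
    and p :: "nat \<Rightarrow> 'v list" and i :: nat and q :: "'v list"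
  assumes "graph V E"
    and "\<And>j. j < N \<Longrightarrow> P j \<subseteq> {xs. is_path V E (u j) (w j) xs}"
    and "\<And>j. j < N \<Longrightarrow> p j \<in> P j"
    and "i < N" and "q \<in> P i"
    and "player_cost N p i > player_cost N (p(i := q)) i"
  shows "total_cost E N p > total_cost E N (p(i := q))"
proof -
  have "finite E"
    using assms(1) unfolding graph_def by (meson Pow_iff finite_Pow_iff finite_subset subsetI)
  moreover have "path_edges (p i) \<subseteq> E" and "path_edges q \<subseteq> E"
    using assms(2-5) unfolding is_path_def by blast+
  ultimately have "2 * total_cost E N p + player_cost N (p(i := q)) i =
      2 * total_cost E N (p(i := q)) + player_cost N p i"
    using assms(4) by (rule total_cost_weighted_potential)
  with assms(6) show ?thesis by linarith
qed

end
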